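(* Let $A\in\mathbb{R}^{n\times n}$, $B\in\mathbb{R}^{n\times k}$ and $F\in\mathbb{R}^{k\times n}$ be arbitrary. For $C\in\mathbb{R}^{m\times n}$ let $\Omega(C,F)=[C;\,C(A+BF);\,\dots;\,C(A+BF)^{n-1}]$ and let $\mathcal{V}^*(C)$ be the maximal $(A,B)$-invariant subspace contained in $\operatorname{Ker}C$. Let $BR1_a=\arg\min_{C\in\mathbb{R}^{m\times n}}\dim\operatorname{Ker}\Omega(C,F)$ and $BR2X_a=\arg\min_{C\in\mathbb{R}^{m\times n}}\dim\mathcal{V}^*(C)$. Then for every $C_1\in BR2X_a$ and every $C_2\in BR1_a$, $\dim\mathcal{V}^*(C_1)\ge\dim\operatorname{Ker}\Omega(C_2,F)$.
   Context: A subspace $\mathcal{V}\subseteq\mathbb{R}^n$ is $(A,B)$-invariant if there exists a matrix $F'$ with $(A+BF')\mathcal{V}\subseteq\mathcal{V}$. Among all $(A,B)$-invariant subspaces contained in $\operatorname{Ker}C$ there is a maximal one, $\mathcal{V}^*(C)$. *)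

theory Defs
  imports "HOL-Analysis.Analysis"
begin

primrec mat_pow :: "real^'n^'n \<Rightarrow> nat \<Rightarrow> real^'n^'n" where
  "mat_pow M 0 = mat 1"
| "mat_pow M (Suc k) = M ** mat_pow M k"

definition ker_mat :: "real^'n^'m \<Rightarrow> (real^'n) set" where
  "ker_mat C = {x. C *v x = 0}"

text \<open>Kernel of the stacked matrix Omega(C,F) = [C; C(A+BF); ...; C(A+BF)^(n-1)],
  n = CARD('n): a vector lies in it iff it lies in the kernel of every block.\<close>
definition omega_ker :: "real^'n^'n \<Rightarrow> real^'k^'n \<Rightarrow> real^'n^'k \<Rightarrow> real^'n^'m \<Rightarrow> (real^'n) set" where
  "omega_ker A B F C = {x. \<forall>i<CARD('n). (C ** mat_pow (A + B ** F) i) *v x = 0}"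

definition AB_invariant :: "real^'n^'n \<Rightarrow> real^'k^'n \<Rightarrow> (real^'n) set \<Rightarrow> bool" where
  "AB_invariant A B V \<longleftrightarrow> subspace V \<and>
     (\<exists>F' :: real^'n^'k. \<forall>x\<in>V. (A + B ** F') *v x \<in> V)"

definition V_star :: "real^'n^'n \<Rightarrow> real^'k^'n \<Rightarrow> real^'n^'m \<Rightarrow> (real^'n) set" where
  "V_star A B C = (THE V. AB_invariant A B V \<and> V \<subseteq> ker_mat C \<and>
      (\<forall>W. AB_invariant A B W \<and> W \<subseteq> ker_mat C \<longrightarrow> W \<subseteq> V))"

definition BR1 :: "real^'n^'n \<Rightarrow> real^'k^'n \<Rightarrow> real^'n^'k \<Rightarrow> (real^'n^'m) set" where
  "BR1 A B F = {C. \<forall>C' :: real^'n^'m. dim (omega_ker A B F C) \<le> dim (omega_ker A B F C')}"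

definition BR2X :: "real^'n^'n \<Rightarrow> real^'k^'n \<Rightarrow> (real^'n^'m) set" where
  "BR2X A B = {C. \<forall>C' :: real^'n^'m. dim (V_star A B C) \<le> dim (V_star A B C')}"

end

theory Submission
  imports Defs
begin

text \<open>
  The kernel of \<open>\<Omega>(C,F)\<close> is the unobservable subspace of the pair \<open>(C, A + BF)\<close>.
  The kernels of the truncated observability matrices form a decreasing chain of subspaces
  of \<open>\<real>\<^sup>n\<close>, which therefore becomes stationary after at most \<open>n\<close> steps; hence the kernel of
  \<open>\<Omega>(C,F)\<close> is \<open>(A + BF)\<close>-invariant. Being contained in \<open>Ker C\<close>, it lies in \<open>\<V>\<^sup>*(C)\<close>.
  So \<open>dim Ker \<Omega>(C\<^sub>2,F) \<le> dim Ker \<Omega>(C\<^sub>1,F) \<le> dim \<V>\<^sup>*(C\<^sub>1)\<close>, the first step by minimality of \<open>C\<^sub>2\<close>.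
\<close>

lemma mat_pow_Suc_right: "mat_pow M (Suc i) = mat_pow M i ** M"
  by (induction i) (simp_all add: matrix_mul_assoc)

definition obs_ker :: "real^'n^'m \<Rightarrow> real^'n^'n \<Rightarrow> nat \<Rightarrow> (real^'n) set" where
  "obs_ker C M j = {x. \<forall>i<j. (C ** mat_pow M i) *v x = 0}"

lemma omega_ker_eq_obs_ker:
  fixes A :: "real^'n^'n"
  shows "omega_ker A B F C = obs_ker C (A + B ** F) CARD('n)"
  unfolding omega_ker_def obs_ker_def ..

lemma subspace_obs_ker: "subspace (obs_ker C M j)"
  unfolding obs_ker_def subspace_def
  by (simp add: matrix_vector_right_distrib matrix_vector_mult_scaleR)

lemma span_obs_ker [simp]: "span (obs_ker C M j) = obs_ker C M j"
  by (simp add: subspace_obs_ker)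

lemma obs_ker_Suc: "obs_ker C M (Suc j) = {x. C *v x = 0 \<and> M *v x \<in> obs_ker C M j}"
  unfolding obs_ker_def
  by (simp add: All_less_Suc2 mat_pow_Suc_right matrix_mul_assoc matrix_vector_mul_assoc
      del: mat_pow.simps(2))

lemma obs_ker_stable:
  assumes "obs_ker C M (Suc j) = obs_ker C M j" and "j \<le> i"
  shows "obs_ker C M i = obs_ker C M j"
  using assms(2)
proof (induction i rule: dec_induct)
  case (step i)
  have "obs_ker C M (Suc i) = obs_ker C M (Suc j)"
    using step.IH by (simp add: obs_ker_Suc)
  with assms(1) show ?case by simp
qed simp

lemma obs_ker_stabilizes:
  fixes M :: "real^'n^'n"
  shows "\<exists>j\<le>CARD('n). obs_ker C M (Suc j) = obs_ker C M j"
proof (rule ccontr)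
  assume strict: "\<not> ?thesis"
  have "dim (obs_ker C M j) + j \<le> CARD('n)" if "j \<le> Suc CARD('n)" for j
    using that
  proof (induction j)
    case 0
    show ?case by (simp add: dim_subset_UNIV_cart)
  next
    case (Suc j)
    have "obs_ker C M (Suc j) \<subseteq> obs_ker C M j"
      by (auto simp: obs_ker_def)
    moreover have "obs_ker C M (Suc j) \<noteq> obs_ker C M j"
      using strict Suc.prems by simp
    ultimately have "span (obs_ker C M (Suc j)) \<subset> span (obs_ker C M j)"
      by (simp add: psubset_eq)
    then have "dim (obs_ker C M (Suc j)) < dim (obs_ker C M j)"
      by (rule dim_psubset)
    with Suc show ?case by simp
  qed
  from this[of "Suc CARD('n)"] show False by simp
qed

lemma obs_ker_invariant:
  fixes M :: "real^'n^'n"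
  assumes "x \<in> obs_ker C M CARD('n)"
  shows "M *v x \<in> obs_ker C M CARD('n)"
proof -
  obtain j where "j \<le> CARD('n)" and j: "obs_ker C M (Suc j) = obs_ker C M j"
    using obs_ker_stabilizes by blast
  then have "obs_ker C M (Suc CARD('n)) = obs_ker C M CARD('n)"
    using obs_ker_stable[OF j, of "Suc CARD('n)"] obs_ker_stable[OF j, of "CARD('n)"] by simp
  with assms have "x \<in> obs_ker C M (Suc CARD('n))"
    by simp
  then show ?thesis
    by (simp add: obs_ker_Suc)
qed

lemma obs_ker_subset_ker_mat: "0 < j \<Longrightarrow> obs_ker C M j \<subseteq> ker_mat C"
  by (auto simp: obs_ker_def ker_mat_def)

lemma AB_invariant_iff:
  fixes A :: "real^'n^'n" and B :: "real^'k^'n"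
  shows "AB_invariant A B V \<longleftrightarrow> subspace V \<and> (\<forall>x\<in>V. \<exists>u. A *v x + B *v u \<in> V)"
proof (intro iffI conjI)
  assume "AB_invariant A B V"
  then obtain F' :: "real^'n^'k" where "subspace V" and F': "\<forall>x\<in>V. (A + B ** F') *v x \<in> V"
    unfolding AB_invariant_def by blast
  show "subspace V" by fact
  show "\<forall>x\<in>V. \<exists>u. A *v x + B *v u \<in> V"
  proof
    fix x assume "x \<in> V"
    with F' have "A *v x + B *v (F' *v x) \<in> V"
      by (simp add: matrix_vector_mult_add_rdistrib matrix_vector_mul_assoc)
    then show "\<exists>u. A *v x + B *v u \<in> V" by blast
  qed
next
  assume "subspace V \<and> (\<forall>x\<in>V. \<exists>u. A *v x + B *v u \<in> V)"
  then have V: "subspace V" and feasible: "\<forall>x\<in>V. \<exists>u. A *v x + B *v u \<in> V"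
    by blast+
  obtain u where u: "\<forall>x\<in>V. A *v x + B *v u x \<in> V"
    using bchoice[OF feasible] by blast
  obtain b where b: "b \<subseteq> V" "independent b" "V \<subseteq> span b"
    by (meson basis_exists)
  \<comment> \<open>The feedback is chosen on a basis of \<open>V\<close> and extended linearly.\<close>
  obtain g where g: "linear g" "\<forall>x\<in>b. g x = u x"
    using linear_independent_extend[OF b(2)] by blast
  define F' where "F' = matrix g"
  have F': "(A + B ** F') *v x = A *v x + B *v g x" for x
    by (simp add: F'_def g(1) matrix_vector_mult_add_rdistrib matrix_vector_mul_assoc[symmetric])
  have "subspace {y. (A + B ** F') *v y \<in> V}"
    using V unfolding subspace_def
    by (simp add: matrix_vector_right_distrib matrix_vector_mult_scaleR)
  moreover have "b \<subseteq> {y. (A + B ** F') *v y \<in> V}"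
    using u b(1) g(2) by (simp add: F' subset_iff)
  ultimately have "\<forall>x\<in>V. (A + B ** F') *v x \<in> V"
    using b(3) span_minimal by blast
  with V show "AB_invariant A B V"
    unfolding AB_invariant_def by blast
qed

lemma AB_invariant_sums:
  assumes "AB_invariant A B V" and "AB_invariant A B W"
  shows "AB_invariant A B {x + y |x y. x \<in> V \<and> y \<in> W}"
  unfolding AB_invariant_iff
proof (intro conjI ballI)
  show "subspace {x + y |x y. x \<in> V \<and> y \<in> W}"
    using assms by (simp add: AB_invariant_iff subspace_sums)
next
  fix z assume "z \<in> {x + y |x y. x \<in> V \<and> y \<in> W}"
  then obtain x y where z: "z = x + y" "x \<in> V" "y \<in> W" by blast
  obtain u1 u2 where "A *v x + B *v u1 \<in> V" "A *v y + B *v u2 \<in> W"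
    using assms z AB_invariant_iff by metis
  moreover have "A *v z + B *v (u1 + u2) = (A *v x + B *v u1) + (A *v y + B *v u2)"
    by (simp add: z matrix_vector_right_distrib)
  ultimately show "\<exists>u. A *v z + B *v u \<in> {x + y |x y. x \<in> V \<and> y \<in> W}"
    by blast
qed

lemma subspace_family_has_greatest:
  fixes S :: "'a::euclidean_space set set"
  assumes "V\<^sub>0 \<in> S" and subspaces: "\<And>V. V \<in> S \<Longrightarrow> subspace V"
    and sums: "\<And>V W. V \<in> S \<Longrightarrow> W \<in> S \<Longrightarrow> {x + y |x y. x \<in> V \<and> y \<in> W} \<in> S"
  shows "\<exists>V\<in>S. \<forall>W\<in>S. W \<subseteq> V"
proof -
  have "\<forall>W. W \<in> S \<longrightarrow> dim W < Suc DIM('a)"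
    by (simp add: dim_subset_UNIV less_Suc_eq_le)
  then obtain V where V: "V \<in> S" and max: "\<forall>W. W \<in> S \<longrightarrow> dim W \<le> dim V"
    using ex_has_greatest_nat[of "\<lambda>V. V \<in> S", OF \<open>V\<^sub>0 \<in> S\<close>] by blast
  have "W \<subseteq> V" if W: "W \<in> S" for W
  proof -
    let ?U = "{x + y |x y. x \<in> V \<and> y \<in> W}"
    have "0 \<in> V" "0 \<in> W"
      using V W subspaces subspace_0 by blast+
    have "V \<subseteq> ?U"
    proof
      fix x assume "x \<in> V"
      with \<open>0 \<in> W\<close> show "x \<in> ?U"
        by (intro CollectI exI[of _ x] exI[of _ 0]) simp
    qed
    moreover have "W \<subseteq> ?U"
    proof
      fix y assume "y \<in> W"
      with \<open>0 \<in> V\<close> show "y \<in> ?U"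
        by (intro CollectI exI[of _ 0] exI[of _ y]) simp
    qed
    moreover have "?U \<in> S"
      using V W sums by blast
    ultimately have "V = ?U"
      using subspace_dim_equal[of V ?U] V max subspaces by blast
    with \<open>W \<subseteq> ?U\<close> show ?thesis
      by simp
  qed
  with V show ?thesis
    by blast
qed

lemma V_star_greatest:
  fixes A :: "real^'n^'n" and B :: "real^'k^'n" and C :: "real^'n^'m"
  assumes "AB_invariant A B W" and "W \<subseteq> ker_mat C"
  shows "W \<subseteq> V_star A B C"
proof -
  let ?S = "{V. AB_invariant A B V \<and> V \<subseteq> ker_mat C}"
  have ker_sums: "{x + y |x y. x \<in> V \<and> y \<in> W} \<subseteq> ker_mat C"
    if "V \<subseteq> ker_mat C" "W \<subseteq> ker_mat C" for V W
    using that by (auto simp: ker_mat_def matrix_vector_right_distrib subset_iff)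
  have "W \<in> ?S"
    using assms by blast
  moreover have "subspace V" if "V \<in> ?S" for V
    using that by (simp add: AB_invariant_def)
  moreover have "{x + y |x y. x \<in> V \<and> y \<in> W} \<in> ?S" if "V \<in> ?S" "W \<in> ?S" for V W
    using that by (simp add: AB_invariant_sums ker_sums)
  ultimately have "\<exists>V\<in>?S. \<forall>W\<in>?S. W \<subseteq> V"
    by (rule subspace_family_has_greatest)
  then obtain V where V: "V \<in> ?S" and greatest: "\<forall>W\<in>?S. W \<subseteq> V"
    by blast
  have "V_star A B C = V"
    unfolding V_star_def
  proof (rule the_equality)
    show "AB_invariant A B V \<and> V \<subseteq> ker_mat C \<and>
        (\<forall>W. AB_invariant A B W \<and> W \<subseteq> ker_mat C \<longrightarrow> W \<subseteq> V)"
      using V greatest by simp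
  next
    fix V' assume "AB_invariant A B V' \<and> V' \<subseteq> ker_mat C \<and>
        (\<forall>W. AB_invariant A B W \<and> W \<subseteq> ker_mat C \<longrightarrow> W \<subseteq> V')"
    with V greatest show "V' = V"
      by (simp add: subset_antisym)
  qed
  with assms greatest show ?thesis by blast
qed

lemma omega_ker_subset_V_star:
  fixes A :: "real^'n^'n" and B :: "real^'k^'n" and F :: "real^'n^'k" and C :: "real^'n^'m"
  shows "omega_ker A B F C \<subseteq> V_star A B C"
proof (rule V_star_greatest)
  show "AB_invariant A B (omega_ker A B F C)"
    unfolding AB_invariant_def omega_ker_eq_obs_ker
    by (blast intro: subspace_obs_ker obs_ker_invariant)
  show "omega_ker A B F C \<subseteq> ker_mat C"
    unfolding omega_ker_eq_obs_ker by (simp add: obs_ker_subset_ker_mat)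
qed

theorem lemma4:
  fixes A :: "real^'n^'n" and B :: "real^'k^'n" and F :: "real^'n^'k"
    and C1 C2 :: "real^'n^'m"
  assumes "C1 \<in> BR2X A B" and "C2 \<in> BR1 A B F"
  shows "dim (V_star A B C1) \<ge> dim (omega_ker A B F C2)"
proof -
  have "dim (omega_ker A B F C2) \<le> dim (omega_ker A B F C1)"
    using assms(2) unfolding BR1_def by blast
  also have "\<dots> \<le> dim (V_star A B C1)"
    by (rule dim_subset[OF omega_ker_subset_V_star])
  finally show ?thesis .
qed

end
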